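(* In the setting below, fix $x_0\in\mathcal{X}$ and suppose $P(\limsup_{n\to\infty}f(X_n)=\infty\mid x_0)=1$. Let $H\subseteq\mathcal{X}^\infty$ be the set of paths $w$ for which $Y_n(w)$ converges to a finite limit, and suppose $P(H\mid x_0)=1$. Then $C$ is $P(\cdot\mid x_0)$-recurrent.
   Context: $\mathcal{X}$ is a Polish space with Borel $\sigma$-algebra $\mathcal{B}$; $X=(X_0,X_1,\dots)$ is a Markov chain on $\mathcal{X}$ with transition kernel $T(\cdot\mid y)$; $P(\cdot\mid x_0)$ is the law on $\mathcal{X}^\infty$ of the chain started at $X_0=x_0$. $C\in\mathcal{B}$; $\tau_C$ is the smallest $n\ge1$ with $X_n\in C$ ($\tau_C=\infty$ if there is none); $E_C=\{\tau_C<\infty\}$. $C$ is $P(\cdot\mid x_0)$-recurrent if $P(E_C\mid x_0)=1$. $f:\mathcal{X}\to[0,\infty)$ is Borel measurable and $Y_n=f(X_{\tau_C\wedge n})$, $n=0,1,2,\dots$. *)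

theory Defs
  imports "HOL-Probability.Probability"
begin

text \<open>Paths are elements of the path space nat \<Rightarrow> 'a, X_n(w) = w n.
  Law of the first n+1 coordinates of the chain with kernel T started at x0,
  as a measure on PiM {0..n} (\<lambda>_. borel).\<close>
primrec path_law :: "('a::topological_space \<Rightarrow> 'a measure) \<Rightarrow> 'a \<Rightarrow> nat \<Rightarrow> (nat \<Rightarrow> 'a) measure" where
  "path_law T x0 0 =
     distr (return borel x0) (PiM {0..0} (\<lambda>_. borel)) (\<lambda>x. \<lambda>i\<in>{0..0}. x)"
| "path_law T x0 (Suc n) =
     path_law T x0 n \<bind>
       (\<lambda>p. distr (T (p n)) (PiM {0..Suc n} (\<lambda>_. borel)) (\<lambda>y. p(Suc n := y)))"

definition markov_law :: "('a::topological_space \<Rightarrow> 'a measure) \<Rightarrow> 'a \<Rightarrow> (nat \<Rightarrow> 'a) measure \<Rightarrow> bool" where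
  "markov_law T x0 M \<longleftrightarrow>
     prob_space M \<and> sets M = sets (PiM UNIV (\<lambda>_::nat. borel)) \<and>
     (\<forall>n. distr M (PiM {0..n} (\<lambda>_. borel)) (\<lambda>w. restrict w {0..n}) = path_law T x0 n)"

definition hit_time :: "'a set \<Rightarrow> (nat \<Rightarrow> 'a) \<Rightarrow> enat" where
  "hit_time C w = (if \<exists>n\<ge>1. w n \<in> C then enat (LEAST n. n \<ge> 1 \<and> w n \<in> C) else \<infinity>)"

definition stopped_proc :: "'a set \<Rightarrow> ('a \<Rightarrow> real) \<Rightarrow> nat \<Rightarrow> (nat \<Rightarrow> 'a) \<Rightarrow> real" where
  "stopped_proc C f n w = f (w (the_enat (min (hit_time C w) (enat n))))"

definition recurrent :: "(nat \<Rightarrow> 'a) measure \<Rightarrow> 'a set \<Rightarrow> bool" where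
  "recurrent M C \<longleftrightarrow> measure M {w \<in> space M. hit_time C w < \<infinity>} = 1"

end

theory Submission
  imports Defs
begin

text \<open>On a path that never enters \<open>C\<close> the stopped process \<open>Y\<^sub>n\<close> is just
  \<open>f(X\<^sub>n)\<close>. So if such a path also had \<open>Y\<^sub>n\<close> converging to a finite limit, then \<open>f(X\<^sub>n)\<close> would
  converge and could not have \<open>limsup f(X\<^sub>n) = \<infinity>\<close>. Almost every path satisfies both
  hypotheses, so almost every path enters \<open>C\<close>. The argument is pathwise: of the law
  only its product \<sigma>-algebra is used (to measure the hitting event).\<close>

lemma hit_time_finite_iff: "hit_time C w < \<infinity> \<longleftrightarrow> (\<exists>n. w (Suc n) \<in> C)"
  by (auto simp: hit_time_def) (metis Suc_le_D)

lemma stopped_proc_never_hit: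
  assumes "hit_time C w = \<infinity>"
  shows "stopped_proc C f n w = f (w n)"
  using assms by (simp add: stopped_proc_def)

lemma hit_time_finite_if_limsup_infinite_and_stopped_convergent:
  assumes limsup: "limsup (\<lambda>n. ereal (f (w n))) = \<infinity>"
    and conv: "convergent (\<lambda>n. stopped_proc C f n w)"
  shows "hit_time C w < \<infinity>"
proof (rule ccontr)
  assume "\<not> hit_time C w < \<infinity>"
  then have "(\<lambda>n. stopped_proc C f n w) = (\<lambda>n. f (w n))"
    by (simp add: stopped_proc_never_hit)
  with conv obtain L where "(\<lambda>n. f (w n)) \<longlonglongrightarrow> L"
    by (auto simp: convergent_def)
  then have "(\<lambda>n. ereal (f (w n))) \<longlonglongrightarrow> ereal L"
    by (rule tendsto_ereal)
  then have "limsup (\<lambda>n. ereal (f (w n))) = ereal L"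
    by (rule lim_imp_Limsup[OF trivial_limit_sequentially])
  with limsup show False
    by simp
qed

lemma hit_event_measurable:
  assumes sets_M: "sets M = sets (PiM UNIV (\<lambda>_::nat. N))"
    and C: "C \<in> sets N"
  shows "{w \<in> space M. hit_time C w < \<infinity>} \<in> sets M"
proof -
  have "(\<lambda>w. w n) \<in> M \<rightarrow>\<^sub>M N" for n
    using measurable_component_singleton[of n UNIV "\<lambda>_. N"]
    by (simp add: measurable_cong_sets[OF sets_M refl])
  then have "{w \<in> space M. w (Suc n) \<in> C} \<in> sets M" for n
    using C by measurable
  then have "(\<Union>n. {w \<in> space M. w (Suc n) \<in> C}) \<in> sets M"
    by blast
  moreover have "{w \<in> space M. hit_time C w < \<infinity>} = (\<Union>n. {w \<in> space M. w (Suc n) \<in> C})"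
    using hit_time_finite_iff by blast
  ultimately show ?thesis
    by simp
qed

theorem theorem4p1:
  fixes T :: "'a::polish_space \<Rightarrow> 'a measure"
    and x0 :: 'a and M :: "(nat \<Rightarrow> 'a) measure" and C :: "'a set" and f :: "'a \<Rightarrow> real"
  assumes kernel: "T \<in> borel \<rightarrow>\<^sub>M prob_algebra borel"
    and law: "markov_law T x0 M"
    and C: "C \<in> sets borel"
    and f_meas: "f \<in> borel_measurable borel"
    and f_nonneg: "\<And>x. f x \<ge> 0"
    and limsup: "measure M {w \<in> space M. limsup (\<lambda>n. ereal (f (w n))) = \<infinity>} = 1"
    and H: "measure M {w \<in> space M. convergent (\<lambda>n. stopped_proc C f n w)} = 1"
  shows "recurrent M C"
proof -
  interpret prob_space M
    using law by (simp add: markov_law_def)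
  have hit_meas: "{w \<in> space M. hit_time C w < \<infinity>} \<in> sets M"
    using law C by (intro hit_event_measurable) (auto simp: markov_law_def)
  have "AE w in M. limsup (\<lambda>n. ereal (f (w n))) = \<infinity>"
    using AE_prob_1[OF limsup] by eventually_elim simp
  moreover have "AE w in M. convergent (\<lambda>n. stopped_proc C f n w)"
    using AE_prob_1[OF H] by eventually_elim simp
  ultimately have "AE w in M. hit_time C w < \<infinity>"
    by eventually_elim (rule hit_time_finite_if_limsup_infinite_and_stopped_convergent)
  then show ?thesis
    unfolding recurrent_def using AE_in_set_eq_1[OF hit_meas] by simp
qed

end
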